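(* Let $f\in\mathcal R^0_{[1]}(\mathbb R^2)$ and $v\in\mathbb R^2$. Then the partial derivative $\partial_v f$ (a regular function on $\mathrm{dom}(f)$) is locally bounded at every point of $\mathrm{pol}(f)$: for each $a\in\mathrm{pol}(f)$ there is a neighbourhood $U$ of $a$ such that $\partial_v f$ is bounded on $U\cap\mathrm{dom}(f)$.
   Context: For $k\in\mathbb N\cup\{\infty\}$, $\mathcal R^k(\mathbb R^2)$ denotes the ring of functions $f:\mathbb R^2\to\mathbb R$ of class $C^k$ that coincide with $p/q$ ($p,q$ polynomials, $q$ nonvanishing there) on some nonempty Zariski open set; $\mathrm{dom}(f)$ is the largest Zariski open set on which the associated rational function is regular and $\mathrm{pol}(f)=\mathbb R^2\setminus\mathrm{dom}(f)$. For $l\in\mathbb N$: consider compositions $\pi:M\to\mathbb R^2$ of successive blowings-up $M_i\to M_{i-1}$ ($M_0=\mathbb R^2$), each centred at points. An infinitely near point of order $j$ is a sequence $a_0\in M_0,\dots,a_j\in M_j$ where $M_i$ is the blowing-up of $M_{i-1}$ at $a_{i-1}$ and $a_i$ maps to $a_{i-1}$; the number of stages of $\pi$ is the maximal order of infinitely near points in $M$. $\mathcal R^k_{[l]}(\mathbb R^2)$ is the set of $f\in\mathcal R^k(\mathbb R^2)$ for which there is such a $\pi$ with at most $l$ stages such that $f\circ\pi$ is regular on $M$. *)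

theory Defs
  imports "HOL-Analysis.Analysis"
begin

definition poly2 :: "(real \<times> real \<Rightarrow> real) \<Rightarrow> bool" where
  "poly2 p \<longleftrightarrow> (\<exists>n::nat. \<exists>c :: nat \<Rightarrow> nat \<Rightarrow> real.
      \<forall>x y. p (x, y) = (\<Sum>i\<le>n. \<Sum>j\<le>n. c i j * x ^ i * y ^ j))"

definition zariski_closed :: "(real \<times> real) set \<Rightarrow> bool" where
  "zariski_closed Z \<longleftrightarrow> (\<exists>G. (\<forall>g\<in>G. poly2 g) \<and> Z = {x. \<forall>g\<in>G. g x = 0})"

definition zariski_open :: "(real \<times> real) set \<Rightarrow> bool" where
  "zariski_open U \<longleftrightarrow> zariski_closed (- U)"

definition rational_fun :: "(real \<times> real \<Rightarrow> real) \<Rightarrow> bool" where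
  "rational_fun f \<longleftrightarrow> (\<exists>p q U. poly2 p \<and> poly2 q \<and> zariski_open U \<and> U \<noteq> {} \<and>
      (\<forall>x\<in>U. q x \<noteq> 0 \<and> f x = p x / q x))"

definition R0 :: "(real \<times> real \<Rightarrow> real) set" where
  "R0 = {f. continuous_on UNIV f \<and> rational_fun f}"

definition regular_at :: "(real \<times> real \<Rightarrow> real) \<Rightarrow> real \<times> real \<Rightarrow> bool" where
  "regular_at f x \<longleftrightarrow> (\<exists>p q. poly2 p \<and> poly2 q \<and> q x \<noteq> 0 \<and>
      (\<forall>\<^sub>F y in nhds x. f y = p y / q y))"

definition dom_f :: "(real \<times> real \<Rightarrow> real) \<Rightarrow> (real \<times> real) set" where
  "dom_f f = {x. regular_at f x}"

definition pol_f :: "(real \<times> real \<Rightarrow> real) \<Rightarrow> (real \<times> real) set" where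
  "pol_f f = UNIV - dom_f f"

text \<open>The two standard affine charts of the blowing-up of R^2 at the point a;
  the exceptional divisor is u = 0 in the first chart and v = 0 in the second.\<close>
definition blow_chart1 :: "real \<times> real \<Rightarrow> real \<times> real \<Rightarrow> real \<times> real" where
  "blow_chart1 a w = (fst a + fst w, snd a + fst w * snd w)"

definition blow_chart2 :: "real \<times> real \<Rightarrow> real \<times> real \<Rightarrow> real \<times> real" where
  "blow_chart2 a w = (fst a + fst w * snd w, snd a + snd w)"

text \<open>A composition of blowings-up with at most one stage is the blowing-up of R^2
  at a finite set S of (distinct) points. f \<circ> \<pi> is regular on M iff f is regular off S
  and f \<circ> \<pi> is regular at every point of each exceptional divisor, checked in both charts.\<close>
definition R0_1 :: "(real \<times> real \<Rightarrow> real) set" where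
  "R0_1 = {f. f \<in> R0 \<and> (\<exists>S. finite S \<and> (\<forall>x. x \<notin> S \<longrightarrow> regular_at f x) \<and>
      (\<forall>a\<in>S. \<forall>t. regular_at (f \<circ> blow_chart1 a) (0, t) \<and>
                 regular_at (f \<circ> blow_chart2 a) (t, 0)))}"

definition partial_dir :: "real \<times> real \<Rightarrow> (real \<times> real \<Rightarrow> real) \<Rightarrow> real \<times> real \<Rightarrow> real" where
  "partial_dir v f x = frechet_derivative f (at x) v"

end

theory Submission
  imports Defs
begin

(* In the first chart
   (u,t) \<mapsto> (fst a + u, snd a + u t) the composite f \<circ> chart is a quotient p/q of
   polynomials near each point (0,t0) of the exceptional divisor, and equals f(a) on
   the divisor; hence p - f(a) q is divisible by u and f \<circ> chart = f(a) + u G with G a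
   C^1 quotient of polynomials.  Differentiating f = f(a) + u G \<circ> chart\<inverse> the 1/u
   coming from chart\<inverse> cancels against the factor u, so the derivative of f is bounded
   by the sup of G and its partials near (0,t0).  Compactness of the slopes t \<in> [-1,1]
   makes this uniform on the cone |snd x - snd a| \<le> |fst x - fst a|, and the second chart
   (reduced to the first by exchanging coordinates) covers the complementary cone. *)

definition bipoly :: "(nat \<Rightarrow> nat \<Rightarrow> real) \<Rightarrow> nat \<Rightarrow> real \<times> real \<Rightarrow> real" where
  "bipoly c n z = (\<Sum>i\<le>n. \<Sum>j\<le>n. c i j * fst z ^ i * snd z ^ j)"

lemma poly2_iff_bipoly: "poly2 p \<longleftrightarrow> (\<exists>c n. p = bipoly c n)"
  unfolding poly2_def bipoly_def by (auto simp: fun_eq_iff)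

definition trunc_coeffs :: "(nat \<Rightarrow> nat \<Rightarrow> real) \<Rightarrow> nat \<Rightarrow> nat \<Rightarrow> nat \<Rightarrow> real" where
  "trunc_coeffs c n i j = (if i \<le> n \<and> j \<le> n then c i j else 0)"

lemma bipoly_raise_degree:
  assumes "n \<le> N"
  shows "bipoly c n = bipoly (trunc_coeffs c n) N"
proof
  fix z
  have "bipoly (trunc_coeffs c n) N z = (\<Sum>i\<le>N. \<Sum>j\<le>N. trunc_coeffs c n i j * fst z ^ i * snd z ^ j)"
    by (simp add: bipoly_def)
  also have "\<dots> = (\<Sum>i\<le>N. \<Sum>j\<le>n. trunc_coeffs c n i j * fst z ^ i * snd z ^ j)"
    using assms by (intro sum.cong refl sum.mono_neutral_right) (auto simp: trunc_coeffs_def)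
  also have "\<dots> = (\<Sum>i\<le>n. \<Sum>j\<le>n. trunc_coeffs c n i j * fst z ^ i * snd z ^ j)"
    using assms by (intro sum.mono_neutral_right) (auto simp: trunc_coeffs_def)
  also have "\<dots> = bipoly c n z"
    by (simp add: bipoly_def trunc_coeffs_def)
  finally show "bipoly c n z = bipoly (trunc_coeffs c n) N z" ..
qed

lemma poly2_diff_scaled:
  assumes "poly2 p" "poly2 q"
  shows "poly2 (\<lambda>z. p z - k * q z)"
proof -
  obtain cp np cq nq where p: "p = bipoly cp np" and q: "q = bipoly cq nq"
    using assms poly2_iff_bipoly by metis
  define N where "N = np + nq"
  have "p = bipoly (trunc_coeffs cp np) N" "q = bipoly (trunc_coeffs cq nq) N"
    unfolding p q N_def by (simp_all add: bipoly_raise_degree[symmetric])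
  then have "p z - k * q z = bipoly (\<lambda>i j. trunc_coeffs cp np i j - k * trunc_coeffs cq nq i j) N z"
    for z by (simp add: bipoly_def sum_subtractf sum_distrib_left algebra_simps)
  then show ?thesis unfolding poly2_iff_bipoly by blast
qed

(* A polynomial vanishing on infinitely many points of the axis u = 0 vanishes on the
   whole axis, hence is divisible by the coordinate u. *)
lemma poly2_divisible_by_fst:
  assumes "poly2 d" "infinite T" "\<forall>t\<in>T. d (0, t) = 0"
  shows "\<exists>r. poly2 r \<and> (\<forall>z. d z = fst z * r z)"
proof -
  obtain c0 n where "d = bipoly c0 n" using assms(1) poly2_iff_bipoly by metis
  define c where "c = trunc_coeffs c0 n"
  have d: "d = bipoly c n" using \<open>d = bipoly c0 n\<close> bipoly_raise_degree[of n n c0] by (simp add: c_def)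
  have on_axis: "d (0, t) = (\<Sum>j\<le>n. c 0 j * t ^ j)" for t
    by (simp add: d bipoly_def sum.atMost_shift)
  have c_first: "c 0 j = 0" for j
  proof (cases "j \<le> n")
    case True
    show ?thesis
    proof (rule ccontr)
      assume "c 0 j \<noteq> 0"
      then have "finite {t. (\<Sum>j\<le>n. c 0 j * t ^ j) = 0}"
        using True by (intro polyfun_roots_finite) auto
      moreover have "T \<subseteq> {t. (\<Sum>j\<le>n. c 0 j * t ^ j) = 0}"
        using assms(3) on_axis by auto
      ultimately show False using assms(2) finite_subset by blast
    qed
  qed (simp add: c_def trunc_coeffs_def)
  have c_last: "c (Suc n) j = 0" for j by (simp add: c_def trunc_coeffs_def)
  define r where "r = bipoly (\<lambda>i j. c (Suc i) j) n"
  have "d (u, t) = u * r (u, t)" for u t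
  proof -
    have "d (u, t) = (\<Sum>i\<le>n. \<Sum>j\<le>n. c i j * u ^ i * t ^ j)"
      by (simp add: d bipoly_def)
    also have "\<dots> = (\<Sum>i\<le>Suc n. \<Sum>j\<le>n. c i j * u ^ i * t ^ j)"
      by (simp add: c_last)
    also have "\<dots> = (\<Sum>i\<le>n. \<Sum>j\<le>n. c (Suc i) j * u ^ Suc i * t ^ j)"
      by (simp only: sum.atMost_Suc_shift c_first) simp
    also have "\<dots> = u * r (u, t)"
      by (simp add: r_def bipoly_def sum_distrib_left algebra_simps)
    finally show ?thesis .
  qed
  moreover have "poly2 r" unfolding r_def poly2_iff_bipoly by blast
  ultimately show ?thesis by auto
qed

lemma poly2_has_derivative:
  assumes "poly2 p"
  shows "\<exists>p1 p2. continuous_on UNIV p1 \<and> continuous_on UNIV p2 \<and>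
     (\<forall>z. (p has_derivative (\<lambda>h. p1 z * fst h + p2 z * snd h)) (at z))"
proof -
  obtain c n where p: "p = bipoly c n" using assms poly2_iff_bipoly by metis
  define p1 where "p1 z = (\<Sum>i\<le>n. \<Sum>j\<le>n. c i j * (of_nat i * fst z ^ (i - 1)) * snd z ^ j)" for z
  define p2 where "p2 z = (\<Sum>i\<le>n. \<Sum>j\<le>n. c i j * fst z ^ i * (of_nat j * snd z ^ (j - 1)))" for z
  have "(p has_derivative (\<lambda>h. p1 z * fst h + p2 z * snd h)) (at z)" for z
    unfolding p bipoly_def[abs_def] p1_def p2_def
    by (auto intro!: derivative_eq_intros
        simp: fun_eq_iff sum_distrib_left sum_distrib_right sum.distrib algebra_simps)
  moreover have "continuous_on UNIV p1" "continuous_on UNIV p2"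
    unfolding p1_def p2_def by (intro continuous_intros)+
  ultimately show ?thesis by blast
qed

lemma poly2_swap:
  assumes "poly2 p"
  shows "poly2 (p \<circ> prod.swap)"
proof -
  obtain c n where "p = bipoly c n" using assms poly2_iff_bipoly by metis
  then have "p \<circ> prod.swap = bipoly (\<lambda>i j. c j i) n"
    by (auto simp: fun_eq_iff bipoly_def mult_ac intro: sum.swap[THEN trans])
  then show ?thesis unfolding poly2_iff_bipoly by blast
qed

definition C1_on :: "(real \<times> real) set \<Rightarrow> (real \<times> real \<Rightarrow> real) \<Rightarrow>
    (real \<times> real \<Rightarrow> real) \<Rightarrow> (real \<times> real \<Rightarrow> real) \<Rightarrow> bool" where
  "C1_on S G g1 g2 \<longleftrightarrow> continuous_on S g1 \<and> continuous_on S g2 \<and>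
     (\<forall>z\<in>S. (G has_derivative (\<lambda>h. g1 z * fst h + g2 z * snd h)) (at z))"

lemma C1_on_subset: "C1_on S G g1 g2 \<Longrightarrow> T \<subseteq> S \<Longrightarrow> C1_on T G g1 g2"
  unfolding C1_on_def by (meson continuous_on_subset subsetD)

lemma C1_on_continuous: "C1_on S G g1 g2 \<Longrightarrow> continuous_on S G"
  unfolding C1_on_def
  by (meson continuous_at_imp_continuous_on has_derivative_continuous)

lemma rational_C1_on:
  assumes "poly2 r" "poly2 q"
  shows "\<exists>g1 g2. C1_on {z. q z \<noteq> 0} (\<lambda>z. r z / q z) g1 g2"
proof -
  obtain r1 r2 where r: "continuous_on UNIV r1" "continuous_on UNIV r2"
    "\<And>z. (r has_derivative (\<lambda>h. r1 z * fst h + r2 z * snd h)) (at z)"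
    using poly2_has_derivative[OF assms(1)] by blast
  obtain q1 q2 where q: "continuous_on UNIV q1" "continuous_on UNIV q2"
    "\<And>z. (q has_derivative (\<lambda>h. q1 z * fst h + q2 z * snd h)) (at z)"
    using poly2_has_derivative[OF assms(2)] by blast
  have cont: "continuous_on UNIV r" "continuous_on UNIV q"
    using r(3) q(3) by (meson continuous_at_imp_continuous_on has_derivative_continuous)+
  define g1 where "g1 z = (r1 z * q z - r z * q1 z) / (q z)\<^sup>2" for z
  define g2 where "g2 z = (r2 z * q z - r z * q2 z) / (q z)\<^sup>2" for z
  have "C1_on {z. q z \<noteq> 0} (\<lambda>z. r z / q z) g1 g2"
    unfolding C1_on_def g1_def g2_def
  proof (intro conjI ballI)
    show "continuous_on {z. q z \<noteq> 0} (\<lambda>z. (r1 z * q z - r z * q1 z) / (q z)\<^sup>2)"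
      "continuous_on {z. q z \<noteq> 0} (\<lambda>z. (r2 z * q z - r z * q2 z) / (q z)\<^sup>2)"
      using r q cont by (auto intro!: continuous_intros intro: continuous_on_subset)
    fix z assume "z \<in> {z. q z \<noteq> 0}"
    then show "((\<lambda>z. r z / q z) has_derivative (\<lambda>h. (r1 z * q z - r z * q1 z) / (q z)\<^sup>2 * fst h
        + (r2 z * q z - r z * q2 z) / (q z)\<^sup>2 * snd h)) (at z)"
      by (auto intro!: derivative_eq_intros r(3) q(3)
          simp: fun_eq_iff field_simps power2_eq_square)
  qed
  then show ?thesis by blast
qed

lemma regular_chart1_factor:
  assumes "regular_at (f \<circ> blow_chart1 a) (0, t0)"
  shows "\<exists>G g1 g2 e. e > 0 \<and> C1_on (ball (0, t0) e) G g1 g2 \<and>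
           (\<forall>w\<in>ball (0, t0) e. f (blow_chart1 a w) = f a + fst w * G w)"
proof -
  obtain p q where pq: "poly2 p" "poly2 q" "q (0, t0) \<noteq> 0"
    and near: "\<forall>\<^sub>F w in nhds (0, t0). f (blow_chart1 a w) = p w / q w"
    using assms unfolding regular_at_def by auto
  obtain q1 q2 where "\<And>z. (q has_derivative (\<lambda>h. q1 z * fst h + q2 z * snd h)) (at z)"
    using poly2_has_derivative[OF pq(2)] by blast
  then have "isCont q (0, t0)" using has_derivative_continuous by blast
  then have "\<forall>\<^sub>F w in nhds (0, t0). q w \<noteq> 0"
    using continuous_at_avoid[of "(0, t0)" q 0] pq(3) unfolding eventually_nhds_metric
    by (metis dist_commute)
  with near have "\<forall>\<^sub>F w in nhds (0, t0). f (blow_chart1 a w) = p w / q w \<and> q w \<noteq> 0"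
    by (rule eventually_conj)
  then obtain e where e: "e > 0"
    and on_ball: "\<And>w. w \<in> ball (0, t0) e \<Longrightarrow> f (blow_chart1 a w) = p w / q w \<and> q w \<noteq> 0"
    unfolding eventually_nhds_metric by (metis dist_commute mem_ball)
  (* The exceptional divisor u = 0 is mapped to a, so p - f(a) q vanishes on it near (0,t0). *)
  have "\<forall>t\<in>ball t0 e. p (0, t) - f a * q (0, t) = 0"
  proof
    fix t assume "t \<in> ball t0 e"
    then have "(0, t) \<in> ball (0, t0) e" by (simp add: dist_Pair_Pair)
    from on_ball[OF this] show "p (0, t) - f a * q (0, t) = 0"
      by (simp add: blow_chart1_def field_simps)
  qed
  moreover have "infinite (ball t0 e)" using e finite_imp_not_open[of "ball t0 e"] by auto
  ultimately obtain r where r: "poly2 r" "\<And>w. p w - f a * q w = fst w * r w"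
    using poly2_divisible_by_fst[OF poly2_diff_scaled[OF pq(1,2)]] by blast
  obtain g1 g2 where "C1_on {w. q w \<noteq> 0} (\<lambda>w. r w / q w) g1 g2"
    using rational_C1_on[OF r(1) pq(2)] by blast
  then have "C1_on (ball (0, t0) e) (\<lambda>w. r w / q w) g1 g2"
    using on_ball by (auto intro: C1_on_subset)
  moreover have "f (blow_chart1 a w) = f a + fst w * (r w / q w)" if "w \<in> ball (0, t0) e" for w
  proof -
    have "p w = f a * q w + fst w * r w" using r(2)[of w] by simp
    then show ?thesis using on_ball[OF that] by (simp add: field_simps)
  qed
  ultimately show ?thesis using e by blast
qed

definition chart1_inv :: "real \<times> real \<Rightarrow> real \<times> real \<Rightarrow> real \<times> real" where
  "chart1_inv a y = (fst y - fst a, (snd y - snd a) / (fst y - fst a))"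

lemma chart1_inv_chart1: "u \<noteq> 0 \<Longrightarrow> chart1_inv a (blow_chart1 a (u, t)) = (u, t)"
  by (simp add: chart1_inv_def blow_chart1_def)

lemma chart1_chart1_inv: "fst y \<noteq> fst a \<Longrightarrow> blow_chart1 a (chart1_inv a y) = y"
  by (simp add: chart1_inv_def blow_chart1_def prod_eq_iff)

lemma chart1_inv_has_derivative:
  assumes "u \<noteq> 0"
  shows "(chart1_inv a has_derivative (\<lambda>h. (fst h, (snd h - t * fst h) / u)))
           (at (blow_chart1 a (u, t)))"
proof -
  let ?x = "blow_chart1 a (u, t)"
  have "((\<lambda>y. (snd y - snd a) / (fst y - fst a)) has_derivative
      (\<lambda>h. ((snd h - 0) * (fst ?x - fst a) - (snd ?x - snd a) * (fst h - 0))
             / ((fst ?x - fst a) * (fst ?x - fst a)))) (at ?x)"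
    using assms by (intro has_derivative_divide' has_derivative_diff has_derivative_const
        has_derivative_fst has_derivative_snd has_derivative_ident) (simp add: blow_chart1_def)
  then have "((\<lambda>y. (fst y - fst a, (snd y - snd a) / (fst y - fst a))) has_derivative
      (\<lambda>h. (fst h - 0, ((snd h - 0) * (fst ?x - fst a) - (snd ?x - snd a) * (fst h - 0))
             / ((fst ?x - fst a) * (fst ?x - fst a))))) (at ?x)"
    by (intro has_derivative_Pair has_derivative_diff has_derivative_const
        has_derivative_fst has_derivative_ident)
  then show ?thesis
    unfolding chart1_inv_def[abs_def]
    by (rule has_derivative_eq_rhs)
      (use assms in \<open>auto simp: blow_chart1_def fun_eq_iff field_simps\<close>)
qed

(* Derivative of y \<mapsto> c + u(y) G(chart1_inv a y) at the image of (u,t): the 1/u coming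
   from the derivative of the chart inverse is cancelled by the factor u. *)
lemma chart1_model_has_derivative:
  assumes u: "u \<noteq> 0" and G: "(G has_derivative (\<lambda>h. g1 * fst h + g2 * snd h)) (at (u, t))"
  shows "((\<lambda>y. c + (fst y - fst a) * G (chart1_inv a y)) has_derivative
           (\<lambda>h. fst h * G (u, t) + u * g1 * fst h + g2 * (snd h - t * fst h)))
         (at (blow_chart1 a (u, t)))"
proof -
  have "(G has_derivative (\<lambda>h. g1 * fst h + g2 * snd h)) (at (chart1_inv a (blow_chart1 a (u, t))))"
    using G by (simp add: chart1_inv_chart1[OF u])
  from has_derivative_compose[OF chart1_inv_has_derivative[OF u] this]
  have "((\<lambda>y. G (chart1_inv a y)) has_derivative
      (\<lambda>h. g1 * fst h + g2 * ((snd h - t * fst h) / u))) (at (blow_chart1 a (u, t)))"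
    by simp
  moreover have "((\<lambda>y. fst y - fst a) has_derivative fst) (at (blow_chart1 a (u, t)))"
    by (auto intro!: derivative_eq_intros)
  ultimately have "((\<lambda>y. c + (fst y - fst a) * G (chart1_inv a y)) has_derivative
      (\<lambda>h. 0 + ((fst (blow_chart1 a (u, t)) - fst a) * (g1 * fst h + g2 * ((snd h - t * fst h) / u))
           + fst h * G (chart1_inv a (blow_chart1 a (u, t))))))
    (at (blow_chart1 a (u, t)))"
    by (intro has_derivative_add has_derivative_const has_derivative_mult)
  then show ?thesis
    by (rule has_derivative_eq_rhs)
      (use u in \<open>auto simp: blow_chart1_def chart1_inv_def fun_eq_iff field_simps\<close>)
qed

lemma chart1_local_derivative:
  assumes C1: "C1_on (ball (0, t0) e) G g1 g2"
    and fG: "\<forall>w\<in>ball (0, t0) e. f (blow_chart1 a w) = f a + fst w * G w"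
    and w: "(u, t) \<in> ball (0, t0) e" and u: "u \<noteq> 0"
  shows "(f has_derivative
           (\<lambda>h. fst h * G (u, t) + u * g1 (u, t) * fst h + g2 (u, t) * (snd h - t * fst h)))
         (at (blow_chart1 a (u, t)))"
proof -
  let ?x = "blow_chart1 a (u, t)"
  define F where "F y = f a + (fst y - fst a) * G (chart1_inv a y)" for y
  have "(F has_derivative
      (\<lambda>h. fst h * G (u, t) + u * g1 (u, t) * fst h + g2 (u, t) * (snd h - t * fst h))) (at ?x)"
    unfolding F_def using C1 w u by (intro chart1_model_has_derivative) (auto simp: C1_on_def)
  moreover have "\<forall>\<^sub>F y in at ?x. F y = f y"
  proof -
    have "isCont (chart1_inv a) ?x"
      using chart1_inv_has_derivative[OF u] has_derivative_continuous by blast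
    then have "\<forall>\<^sub>F y in at ?x. chart1_inv a y \<in> ball (0, t0) e"
      using w by (intro topological_tendstoD) (auto simp: isCont_def chart1_inv_chart1[OF u])
    moreover have "((\<lambda>y. fst y - fst a) \<longlongrightarrow> u) (at ?x)"
      by (auto intro!: tendsto_eq_intros simp: blow_chart1_def)
    then have "\<forall>\<^sub>F y in at ?x. fst y - fst a \<noteq> 0"
      using u by (rule tendsto_imp_eventually_ne)
    ultimately show ?thesis
    proof eventually_elim
      case (elim y)
      then have "f y = f (blow_chart1 a (chart1_inv a y))" by (simp add: chart1_chart1_inv)
      also have "\<dots> = F y" using fG elim(1) by (simp add: F_def chart1_inv_def)
      finally show ?case ..
    qed
  qed
  moreover have "F ?x = f ?x"
  proof -
    have "F ?x = f a + u * G (u, t)"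
      unfolding F_def chart1_inv_chart1[OF u] by (simp add: blow_chart1_def)
    then show ?thesis using fG w by simp
  qed
  ultimately show ?thesis by (rule has_derivative_transform_eventually) simp
qed

definition deriv_bound_at :: "('a::real_normed_vector \<Rightarrow> real) \<Rightarrow> 'a \<Rightarrow> real \<Rightarrow> bool" where
  "deriv_bound_at f x K \<longleftrightarrow> (\<exists>D. (f has_derivative D) (at x) \<and> (\<forall>h. \<bar>D h\<bar> \<le> K * norm h))"

lemma deriv_bound_at_mono: "deriv_bound_at f x K \<Longrightarrow> K \<le> K' \<Longrightarrow> deriv_bound_at f x K'"
  unfolding deriv_bound_at_def by (meson mult_right_mono norm_ge_zero order_trans)

lemma deriv_bound_at_directional:
  "deriv_bound_at f x K \<Longrightarrow> \<bar>frechet_derivative f (at x) v\<bar> \<le> K * norm v"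
  unfolding deriv_bound_at_def using frechet_derivative_at by metis

lemma bilinear_bound:
  fixes x1 x2 u t A B C n M \<epsilon> T :: real
  assumes x: "\<bar>x1\<bar> \<le> n" "\<bar>x2\<bar> \<le> n" and u: "\<bar>u\<bar> \<le> \<epsilon>" and t: "\<bar>t\<bar> \<le> T"
    and M: "\<bar>A\<bar> \<le> M" "\<bar>B\<bar> \<le> M" "\<bar>C\<bar> \<le> M"
  shows "\<bar>x1 * A + u * B * x1 + C * (x2 - t * x1)\<bar> \<le> M * (2 + \<epsilon> + T) * n"
proof -
  have "\<bar>x1 * A\<bar> \<le> n * M" unfolding abs_mult using x M by (intro mult_mono) auto
  moreover have "\<bar>u * B * x1\<bar> \<le> \<epsilon> * M * n" unfolding abs_mult using x u M
    by (intro mult_mono) auto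
  moreover have "\<bar>t\<bar> * \<bar>x1\<bar> \<le> T * n"
    using t x(1) by (intro mult_mono) auto
  then have "\<bar>x2 - t * x1\<bar> \<le> n + T * n"
    using abs_triangle_ineq4[of x2 "t * x1"] x(2) unfolding abs_mult by linarith
  then have "\<bar>C * (x2 - t * x1)\<bar> \<le> M * (n + T * n)" unfolding abs_mult using M
    by (intro mult_mono) auto
  ultimately have "\<bar>x1 * A + u * B * x1 + C * (x2 - t * x1)\<bar> \<le> n * M + \<epsilon> * M * n + M * (n + T * n)"
    by (smt (verit) abs_triangle_ineq)
  also have "\<dots> = M * (2 + \<epsilon> + T) * n" by (simp add: algebra_simps)
  finally show ?thesis .
qed

lemma chart1_local_bound:
  assumes "regular_at (f \<circ> blow_chart1 a) (0, t0)"
  shows "\<exists>\<epsilon>>0. \<exists>K. \<forall>u t. \<bar>u\<bar> < \<epsilon> \<and> \<bar>t - t0\<bar> < \<epsilon> \<longrightarrow>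
           (u \<noteq> 0 \<longrightarrow> deriv_bound_at f (blow_chart1 a (u, t)) K)"
proof -
  obtain G g1 g2 e where e: "e > 0" and C1: "C1_on (ball (0, t0) e) G g1 g2"
    and fG: "\<forall>w\<in>ball (0, t0) e. f (blow_chart1 a w) = f a + fst w * G w"
    using regular_chart1_factor[OF assms] by blast
  define C where "C = cball (0::real, t0) (e / 2)"
  have C_ball: "C \<subseteq> ball (0, t0) e" using e by (auto simp: C_def)
  have "continuous_on C (\<lambda>w. \<bar>G w\<bar> + \<bar>g1 w\<bar> + \<bar>g2 w\<bar>)"
    using C1_on_subset[OF C1 C_ball] C1_on_continuous[OF C1_on_subset[OF C1 C_ball]]
    by (auto simp: C1_on_def intro!: continuous_intros)
  then obtain M where M: "\<And>w. w \<in> C \<Longrightarrow> \<bar>G w\<bar> + \<bar>g1 w\<bar> + \<bar>g2 w\<bar> \<le> M"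
    using compact_imp_bounded[OF compact_continuous_image, of C] by (force simp: C_def bounded_iff)
  define \<epsilon> where "\<epsilon> = e / 4"
  define K where "K = M * (2 + \<epsilon> + (\<bar>t0\<bar> + \<epsilon>))"
  have "deriv_bound_at f (blow_chart1 a (u, t)) K"
    if ut: "\<bar>u\<bar> < \<epsilon>" "\<bar>t - t0\<bar> < \<epsilon>" "u \<noteq> 0" for u t
  proof -
    have "dist (0, t0) (u, t) \<le> \<bar>u\<bar> + \<bar>t - t0\<bar>"
      using sqrt_sum_squares_le_sum_abs[of u "t0 - t"] by (simp add: dist_Pair_Pair dist_real_def)
    then have wC: "(u, t) \<in> C" using ut by (simp add: C_def \<epsilon>_def)
    define D where
      "D h = fst h * G (u, t) + u * g1 (u, t) * fst h + g2 (u, t) * (snd h - t * fst h)" for h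
    have "(f has_derivative D) (at (blow_chart1 a (u, t)))"
      unfolding D_def using chart1_local_derivative[OF C1 fG] wC C_ball ut(3) by blast
    moreover have "\<bar>D h\<bar> \<le> K * norm h" for h
    proof -
      have "\<bar>fst h\<bar> \<le> norm h" "\<bar>snd h\<bar> \<le> norm h"
        using norm_fst_le[of "fst h" "snd h"] norm_snd_le[of "snd h" "fst h"] by simp_all
      moreover have "\<bar>t\<bar> \<le> \<bar>t0\<bar> + \<epsilon>" using ut by linarith
      moreover have "\<bar>G (u, t)\<bar> \<le> M" "\<bar>g1 (u, t)\<bar> \<le> M" "\<bar>g2 (u, t)\<bar> \<le> M"
        using M[OF wC] by linarith+
      ultimately show ?thesis
        unfolding D_def K_def using ut(1) by (intro bilinear_bound) auto
    qed
    ultimately show ?thesis unfolding deriv_bound_at_def by blast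
  qed
  moreover have "\<epsilon> > 0" using e by (simp add: \<epsilon>_def)
  ultimately show ?thesis by blast
qed

lemma uniform_bound_over_compact:
  fixes P :: "real \<Rightarrow> real \<Rightarrow> real \<Rightarrow> bool"
  assumes T: "compact T"
    and mono: "\<And>u t K K'. P u t K \<Longrightarrow> K \<le> K' \<Longrightarrow> P u t K'"
    and local: "\<And>t0. t0 \<in> T \<Longrightarrow> \<exists>\<epsilon>>0. \<exists>K. \<forall>u t. \<bar>u\<bar> < \<epsilon> \<and> \<bar>t - t0\<bar> < \<epsilon> \<longrightarrow> P u t K"
  shows "\<exists>\<delta>>0. \<exists>K. \<forall>u t. \<bar>u\<bar> < \<delta> \<and> t \<in> T \<longrightarrow> P u t K"
proof -
  obtain \<epsilon> K where \<epsilon>: "\<And>t0. t0 \<in> T \<Longrightarrow> \<epsilon> t0 > 0"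
    and K: "\<And>t0 u t. t0 \<in> T \<Longrightarrow> \<bar>u\<bar> < \<epsilon> t0 \<Longrightarrow> \<bar>t - t0\<bar> < \<epsilon> t0 \<Longrightarrow> P u t (K t0)"
    using local by metis
  have "T \<subseteq> (\<Union>t0\<in>T. ball t0 (\<epsilon> t0))" using \<epsilon> by force
  then obtain T' where T': "T' \<subseteq> T" "finite T'" "T \<subseteq> (\<Union>t0\<in>T'. ball t0 (\<epsilon> t0))"
    using compactE_image[OF T, of T "\<lambda>t0. ball t0 (\<epsilon> t0)"] by blast
  define \<delta> where "\<delta> = Min (insert 1 (\<epsilon> ` T'))"
  define K' where "K' = Max (insert 0 (K ` T'))"
  have "\<delta> > 0" using T' \<epsilon> by (auto simp: \<delta>_def)
  moreover have "P u t K'" if "\<bar>u\<bar> < \<delta>" "t \<in> T" for u t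
  proof -
    obtain t0 where t0: "t0 \<in> T'" "t \<in> ball t0 (\<epsilon> t0)" using T'(3) \<open>t \<in> T\<close> by blast
    have "\<delta> \<le> \<epsilon> t0" "K t0 \<le> K'" using T'(2) t0(1) by (auto simp: \<delta>_def K'_def)
    then have "P u t (K t0)"
      using K[of t0 u t] T'(1) t0 that(1) by (auto simp: dist_real_def)
    then show ?thesis using mono \<open>K t0 \<le> K'\<close> by blast
  qed
  ultimately show ?thesis by blast
qed

(* In the first chart the slopes t \<in> [-1,1] cover the double cone
   |snd x - snd a| \<le> |fst x - fst a| around a; there the derivative of f is uniformly
   bounded. *)
lemma chart1_cone_bound:
  assumes "\<forall>t. regular_at (f \<circ> blow_chart1 a) (0, t)"
  shows "\<exists>\<delta>>0. \<exists>K. \<forall>x. fst x \<noteq> fst a \<and> \<bar>fst x - fst a\<bar> < \<delta> \<and>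
           \<bar>snd x - snd a\<bar> \<le> \<bar>fst x - fst a\<bar> \<longrightarrow> deriv_bound_at f x K"
proof -
  have "\<exists>\<delta>>0. \<exists>K. \<forall>u t. \<bar>u\<bar> < \<delta> \<and> t \<in> {-1..1} \<longrightarrow>
      (u \<noteq> 0 \<longrightarrow> deriv_bound_at f (blow_chart1 a (u, t)) K)"
  proof (rule uniform_bound_over_compact)
    fix t0 :: real
    show "\<exists>\<epsilon>>0. \<exists>K. \<forall>u t. \<bar>u\<bar> < \<epsilon> \<and> \<bar>t - t0\<bar> < \<epsilon> \<longrightarrow>
        (u \<noteq> 0 \<longrightarrow> deriv_bound_at f (blow_chart1 a (u, t)) K)"
      using chart1_local_bound[OF assms[rule_format]] .
  qed (auto intro: deriv_bound_at_mono)
  then obtain \<delta> K where \<delta>: "\<delta> > 0" and K: "\<And>u t. \<bar>u\<bar> < \<delta> \<Longrightarrow> t \<in> {-1..1} \<Longrightarrow>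
      u \<noteq> 0 \<Longrightarrow> deriv_bound_at f (blow_chart1 a (u, t)) K"
    by blast
  have "deriv_bound_at f x K"
    if x: "fst x \<noteq> fst a" "\<bar>fst x - fst a\<bar> < \<delta>" "\<bar>snd x - snd a\<bar> \<le> \<bar>fst x - fst a\<bar>" for x
  proof -
    define u where "u = fst x - fst a"
    define t where "t = (snd x - snd a) / u"
    have u: "u \<noteq> 0" using x(1) by (simp add: u_def)
    have "\<bar>t\<bar> \<le> 1" using x(3) u by (simp add: t_def u_def abs_divide divide_le_eq_1)
    then have "deriv_bound_at f (blow_chart1 a (u, t)) K"
      using K[of u t] x(2) u by (simp add: u_def abs_le_iff)
    moreover have "blow_chart1 a (u, t) = x"
      using u by (simp add: blow_chart1_def u_def t_def prod_eq_iff)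
    ultimately show ?thesis by simp
  qed
  with \<delta> show ?thesis by blast
qed

(* Exchanging coordinates, used to reduce the second chart to the first. *)
lemma regular_at_swap:
  assumes "regular_at g w"
  shows "regular_at (g \<circ> prod.swap) (prod.swap w)"
proof -
  obtain p q where pq: "poly2 p" "poly2 q" "q w \<noteq> 0"
    and near: "\<forall>\<^sub>F y in nhds w. g y = p y / q y"
    using assms unfolding regular_at_def by blast
  have "filterlim prod.swap (nhds w) (nhds (prod.swap w))"
    using isCont_swap[of "prod.swap w"] by (simp add: tendsto_nhds_iff isCont_def)
  with near have "\<forall>\<^sub>F y in nhds (prod.swap w). g (prod.swap y) = p (prod.swap y) / q (prod.swap y)"
    by (rule eventually_compose_filterlim)
  then show ?thesis
    unfolding regular_at_def using pq poly2_swap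
    by (intro exI[of _ "p \<circ> prod.swap"] exI[of _ "q \<circ> prod.swap"]) auto
qed

lemma deriv_bound_at_swap:
  assumes "deriv_bound_at (f \<circ> prod.swap) (prod.swap x) K"
  shows "deriv_bound_at f x K"
proof -
  obtain D where D: "((f \<circ> prod.swap) has_derivative D) (at (prod.swap x))"
    "\<And>h. \<bar>D h\<bar> \<le> K * norm h"
    using assms unfolding deriv_bound_at_def by blast
  have "(prod.swap has_derivative prod.swap) (at x)"
    unfolding prod.swap_def[abs_def] by (intro derivative_intros)
  from has_derivative_compose[OF this D(1)]
  have "(f has_derivative (\<lambda>h. D (prod.swap h))) (at x)" by (simp add: o_def)
  moreover have "\<bar>D (prod.swap h)\<bar> \<le> K * norm h" for h
  proof -
    have "norm (prod.swap h) = norm h" by (cases h) (simp add: norm_Pair add.commute)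
    then show ?thesis using D(2)[of "prod.swap h"] by simp
  qed
  ultimately show ?thesis unfolding deriv_bound_at_def by blast
qed

(* The two cones cover a punctured ball around a: the derivative of f is bounded there. *)
lemma punctured_ball_bound:
  assumes "\<forall>t. regular_at (f \<circ> blow_chart1 a) (0, t) \<and> regular_at (f \<circ> blow_chart2 a) (t, 0)"
  shows "\<exists>\<delta>>0. \<exists>K. \<forall>x\<in>ball a \<delta>. x \<noteq> a \<longrightarrow> deriv_bound_at f x K"
proof -
  have "\<forall>t. regular_at (f \<circ> blow_chart1 a) (0, t)" using assms by blast
  from chart1_cone_bound[OF this] obtain \<delta>1 K1 where \<delta>1: "\<delta>1 > 0"
    and K1: "\<forall>x. fst x \<noteq> fst a \<and> \<bar>fst x - fst a\<bar> < \<delta>1 \<and>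
      \<bar>snd x - snd a\<bar> \<le> \<bar>fst x - fst a\<bar> \<longrightarrow> deriv_bound_at f x K1"
    by blast
  have "(f \<circ> prod.swap) \<circ> blow_chart1 (prod.swap a) = (f \<circ> blow_chart2 a) \<circ> prod.swap"
    by (rule ext) (simp add: blow_chart1_def blow_chart2_def mult.commute)
  then have "\<forall>t. regular_at ((f \<circ> prod.swap) \<circ> blow_chart1 (prod.swap a)) (0, t)"
    using assms regular_at_swap[of "f \<circ> blow_chart2 a"] by (metis swap_simp)
  from chart1_cone_bound[OF this] obtain \<delta>2 K2 where \<delta>2: "\<delta>2 > 0"
    and K2: "\<forall>x. fst x \<noteq> snd a \<and> \<bar>fst x - snd a\<bar> < \<delta>2 \<and>
      \<bar>snd x - fst a\<bar> \<le> \<bar>fst x - snd a\<bar> \<longrightarrow> deriv_bound_at (f \<circ> prod.swap) x K2"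
    by auto
  define \<delta> where "\<delta> = min \<delta>1 \<delta>2"
  define K where "K = max K1 K2"
  have "deriv_bound_at f x K" if x: "x \<in> ball a \<delta>" "x \<noteq> a" for x
  proof -
    have close: "\<bar>fst x - fst a\<bar> < \<delta>" "\<bar>snd x - snd a\<bar> < \<delta>"
      using x(1) dist_fst_le[of x a] dist_snd_le[of x a] by (auto simp: dist_real_def dist_commute)
    consider "\<bar>snd x - snd a\<bar> \<le> \<bar>fst x - fst a\<bar>" | "\<bar>fst x - fst a\<bar> \<le> \<bar>snd x - snd a\<bar>"
      by linarith
    then show ?thesis
    proof cases
      case 1
      then have "fst x \<noteq> fst a" using x(2) by (auto simp: prod_eq_iff)
      then have "deriv_bound_at f x K1" using K1[rule_format, of x] 1 close by (simp add: \<delta>_def)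
      then show ?thesis by (rule deriv_bound_at_mono) (simp add: K_def)
    next
      case 2
      then have "snd x \<noteq> snd a" using x(2) by (auto simp: prod_eq_iff)
      then have "deriv_bound_at (f \<circ> prod.swap) (prod.swap x) K2"
        using K2[rule_format, of "prod.swap x"] 2 close by (simp add: \<delta>_def)
      then have "deriv_bound_at f x K2" by (rule deriv_bound_at_swap)
      then show ?thesis by (rule deriv_bound_at_mono) (simp add: K_def)
    qed
  qed
  moreover have "\<delta> > 0" using \<delta>1 \<delta>2 by (simp add: \<delta>_def)
  ultimately show ?thesis by blast
qed

theorem proposition3p6:
  fixes f :: "real \<times> real \<Rightarrow> real" and v :: "real \<times> real"
  assumes "f \<in> R0_1"
  shows "\<forall>a\<in>pol_f f. \<exists>U. open U \<and> a \<in> U \<and>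
           (\<exists>B. \<forall>x\<in>U \<inter> dom_f f. \<bar>partial_dir v f x\<bar> \<le> B)"
proof
  fix a assume a: "a \<in> pol_f f"
  obtain S where regular_off_S: "\<forall>x. x \<notin> S \<longrightarrow> regular_at f x"
    and blowup: "\<forall>a\<in>S. \<forall>t. regular_at (f \<circ> blow_chart1 a) (0, t) \<and>
                             regular_at (f \<circ> blow_chart2 a) (t, 0)"
    using assms unfolding R0_1_def by blast
  have "a \<in> S" using a regular_off_S unfolding pol_f_def dom_f_def by blast
  then obtain \<delta> K where "\<delta> > 0" and K: "\<forall>x\<in>ball a \<delta>. x \<noteq> a \<longrightarrow> deriv_bound_at f x K"
    using punctured_ball_bound blowup by blast
  have bound: "\<bar>partial_dir v f x\<bar> \<le> K * norm v" if "x \<in> ball a \<delta> \<inter> dom_f f" for x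
  proof -
    have "x \<noteq> a" using that a by (auto simp: pol_f_def)
    then show ?thesis
      using K that unfolding partial_dir_def by (blast intro: deriv_bound_at_directional)
  qed
  show "\<exists>U. open U \<and> a \<in> U \<and> (\<exists>B. \<forall>x\<in>U \<inter> dom_f f. \<bar>partial_dir v f x\<bar> \<le> B)"
  proof (intro exI[of _ "ball a \<delta>"] conjI exI[of _ "K * norm v"])
    show "a \<in> ball a \<delta>" using \<open>\<delta> > 0\<close> by simp
  qed (use bound in auto)
qed

end
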